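(* Let $\varepsilon>0$, $k\in\mathbb N$ with $k\ge1$, and $0<r_{\max}<\infty$. Then the mechanism $r\mapsto\mathrm{ScalarDP}(r,\varepsilon;k,r_{\max})$ (on inputs $r\ge0$) is $\varepsilon$-locally differentially private, and for $Z=\mathrm{ScalarDP}(r,\varepsilon;k,r_{\max})$ with $0\le r\le r_{\max}$ we have $\mathbb E[Z]=r$ and \[ \mathbb E[(Z-r)^2]\le \frac{k+1}{e^\varepsilon-1}\Big[r^2+\frac{r_{\max}^2}{4k^2}+\frac{(2k+1)(e^\varepsilon+k)\,r_{\max}^2}{6k(e^\varepsilon-1)}\Big]+\frac{r_{\max}^2}{4k^2}. \]
   Context: $\mathrm{ScalarDP}(r,\varepsilon;k,r_{\max})$: set $r\leftarrow\min\{r,r_{\max}\}$ and $x=kr/r_{\max}$. Sample $J=\lfloor x\rfloor$ with probability $\lceil x\rceil-x$ and $J=\lceil x\rceil$ otherwise (so $J\in\{0,\dots,k\}$). Randomized response: given $J=i$, set $\widehat J=i$ with probability $\frac{e^\varepsilon}{e^\varepsilon+k}$ and otherwise $\widehat J$ uniform on $\{0,\dots,k\}\setminus\{i\}$. Output $Z=a(\widehat J-b)$ with $a=\frac{e^\varepsilon+k}{e^\varepsilon-1}\cdot\frac{r_{\max}}k$ and $b=\frac{k(k+1)}{2(e^\varepsilon+k)}$. A mechanism $M$ is $\varepsilon$-locally differentially private if $\mathbb P(M(r)\in S)\le e^{\varepsilon}\mathbb P(M(r')\in S)$ for all inputs $r,r'$ and sets $S$. *)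

theory Defs
  imports "HOL-Probability.Probability"
begin

definition sr_level :: "nat \<Rightarrow> real \<Rightarrow> real \<Rightarrow> nat pmf" where
  "sr_level k rmax r =
     (let x = real k * min r rmax / rmax in
      map_pmf (\<lambda>b. if b then nat \<lfloor>x\<rfloor> else nat \<lceil>x\<rceil>)
              (bernoulli_pmf (real_of_int \<lceil>x\<rceil> - x)))"

definition rand_resp :: "real \<Rightarrow> nat \<Rightarrow> nat \<Rightarrow> nat pmf" where
  "rand_resp \<epsilon> k i =
     bind_pmf (bernoulli_pmf (exp \<epsilon> / (exp \<epsilon> + real k)))
       (\<lambda>keep. if keep then return_pmf i else pmf_of_set ({0..k} - {i}))"

definition sdp_a :: "real \<Rightarrow> nat \<Rightarrow> real \<Rightarrow> real" where
  "sdp_a \<epsilon> k rmax = (exp \<epsilon> + real k) / (exp \<epsilon> - 1) * (rmax / real k)"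

definition sdp_b :: "real \<Rightarrow> nat \<Rightarrow> real" where
  "sdp_b \<epsilon> k = real k * (real k + 1) / (2 * (exp \<epsilon> + real k))"

definition ScalarDP :: "real \<Rightarrow> real \<Rightarrow> nat \<Rightarrow> real \<Rightarrow> real pmf" where
  "ScalarDP r \<epsilon> k rmax =
     map_pmf (\<lambda>j. sdp_a \<epsilon> k rmax * (real j - sdp_b \<epsilon> k))
       (bind_pmf (sr_level k rmax r) (rand_resp \<epsilon> k))"

definition eps_LDP :: "real \<Rightarrow> 'a set \<Rightarrow> ('a \<Rightarrow> 'b pmf) \<Rightarrow> bool" where
  "eps_LDP \<epsilon> D M \<longleftrightarrow>
     (\<forall>r\<in>D. \<forall>r'\<in>D. \<forall>S. measure_pmf.prob (M r) S \<le> exp \<epsilon> * measure_pmf.prob (M r') S)"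

end

theory Submission
  imports Defs
begin

text \<open>
  The rounded level J is an unbiased estimate of x = k r / r_max whose variance is
  frac x (1 - frac x) \<le> 1/4.  Randomized response outputs J with probability
  (e^\<epsilon> - 1)/(e^\<epsilon> + k) and a uniform level of {0..k} otherwise, so every output level has
  probability between 1/(e^\<epsilon> + k) and e^\<epsilon>/(e^\<epsilon> + k), which is \<epsilon>-LDP.  The
  affine map z = a (j - b) undoes the mixing with the uniform distribution, and the
  mean squared error is an explicit quadratic expression in the first two moments
  of J.
\<close>

definition stoch_round :: "real \<Rightarrow> nat pmf" where
  "stoch_round x = map_pmf (\<lambda>b. if b then nat \<lfloor>x\<rfloor> else nat \<lceil>x\<rceil>)
                           (bernoulli_pmf (of_int \<lceil>x\<rceil> - x))"

lemma sr_level_eq_stoch_round: "sr_level k rmax r = stoch_round (real k * min r rmax / rmax)"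
  by (simp add: sr_level_def stoch_round_def Let_def)

lemma set_pmf_stoch_round:
  assumes "0 \<le> x" "x \<le> real n"
  shows "set_pmf (stoch_round x) \<subseteq> {0..n}"
proof -
  have "\<lceil>x\<rceil> \<le> int n" using assms(2) by (simp add: ceiling_le_iff)
  then have "nat \<lfloor>x\<rfloor> \<le> n" "nat \<lceil>x\<rceil> \<le> n" by linarith+
  then show ?thesis by (auto simp: stoch_round_def)
qed

lemma expectation_stoch_round:
  "measure_pmf.expectation (stoch_round x) h
     = (of_int \<lceil>x\<rceil> - x) * h (nat \<lfloor>x\<rfloor>) + (1 - (of_int \<lceil>x\<rceil> - x)) * h (nat \<lceil>x\<rceil>)"
proof -
  have "0 \<le> of_int \<lceil>x\<rceil> - x" "of_int \<lceil>x\<rceil> - x \<le> 1" by linarith+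
  then show ?thesis by (simp add: stoch_round_def mult.commute)
qed

lemma expectation_stoch_round_quadratic:
  assumes "0 \<le> x"
  shows "measure_pmf.expectation (stoch_round x) (\<lambda>j. \<alpha> + \<beta> * real j + \<gamma> * (real j)\<^sup>2)
     = \<alpha> + \<beta> * x + \<gamma> * (x\<^sup>2 + frac x * (1 - frac x))"
proof (cases "x \<in> \<int>")
  case True
  then show ?thesis using assms
    by (auto simp: expectation_stoch_round frac_def elim!: Ints_cases)
next
  case False
  then have "\<lceil>x\<rceil> = \<lfloor>x\<rfloor> + 1"
    by (metis Ints_of_int ceiling_altdef)
  then show ?thesis using assms
    by (simp add: expectation_stoch_round frac_def algebra_simps power2_eq_square)
qed

lemma pmf_rand_resp:
  assumes "i \<le> k" "k \<ge> 1"
  shows "pmf (rand_resp \<epsilon> k i) j =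
    (if j \<le> k then (if j = i then exp \<epsilon> else 1) / (exp \<epsilon> + real k) else 0)"
proof -
  have c: "exp \<epsilon> + real k > 0" by (simp add: add_pos_nonneg)
  have k: "real k > 0" using assms(2) by simp
  have card: "card ({0..k} - {i}) = k" using assms by simp
  then have "{0..k} - {i} \<noteq> {}" using assms(2) by (metis card.empty not_one_le_zero)
  moreover have "exp \<epsilon> / (exp \<epsilon> + real k) \<le> 1" using c by simp
  moreover have "1 - exp \<epsilon> / (exp \<epsilon> + real k) = real k / (exp \<epsilon> + real k)"
    using c by (simp add: field_simps)
  ultimately show ?thesis using assms c k card
    by (auto simp: rand_resp_def pmf_bind indicator_def)
qed

lemma pmf_bind_rand_resp:
  assumes "set_pmf p \<subseteq> {0..k}" "k \<ge> 1"
  shows "pmf (p \<bind> rand_resp \<epsilon> k) j =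
    (if j \<le> k then ((exp \<epsilon> - 1) * pmf p j + 1) / (exp \<epsilon> + real k) else 0)"
proof -
  have "pmf (p \<bind> rand_resp \<epsilon> k) j = (\<Sum>i\<in>{0..k}. pmf (rand_resp \<epsilon> k i) j * pmf p i)"
    unfolding pmf_bind using assms(1) by (intro integral_measure_pmf_real) auto
  also have "\<dots> = (if j \<le> k then (\<Sum>i\<in>{0..k}. pmf p i + (if i = j then (exp \<epsilon> - 1) * pmf p i else 0))
                     / (exp \<epsilon> + real k) else 0)"
    using assms(2) by (auto simp: pmf_rand_resp sum_divide_distrib algebra_simps intro!: sum.cong)
  finally show ?thesis
    using sum_pmf_eq_1[of "{0..k}" p] assms(1) by (simp add: sum.distrib)
qed

lemma set_pmf_bind_rand_resp:
  assumes "set_pmf p \<subseteq> {0..k}" "k \<ge> 1"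
  shows "set_pmf (p \<bind> rand_resp \<epsilon> k) \<subseteq> {0..k}"
  using pmf_bind_rand_resp[OF assms] by (auto simp: set_pmf_eq)

lemma expectation_bind_rand_resp:
  assumes "set_pmf p \<subseteq> {0..k}" "k \<ge> 1"
  shows "measure_pmf.expectation (p \<bind> rand_resp \<epsilon> k) h
     = ((exp \<epsilon> - 1) * measure_pmf.expectation p h + (\<Sum>j=0..k. h j)) / (exp \<epsilon> + real k)"
proof -
  have "measure_pmf.expectation (p \<bind> rand_resp \<epsilon> k) h = (\<Sum>j=0..k. h j * pmf (p \<bind> rand_resp \<epsilon> k) j)"
    using set_pmf_bind_rand_resp[OF assms, where \<epsilon> = \<epsilon>] by (intro integral_measure_pmf_real) auto
  also have "\<dots> = (\<Sum>j=0..k. ((exp \<epsilon> - 1) * (h j * pmf p j) + h j) / (exp \<epsilon> + real k))"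
    by (intro sum.cong) (auto simp: pmf_bind_rand_resp[OF assms] algebra_simps)
  also have "\<dots> = ((exp \<epsilon> - 1) * (\<Sum>j=0..k. h j * pmf p j) + (\<Sum>j=0..k. h j)) / (exp \<epsilon> + real k)"
    by (simp add: sum_divide_distrib[symmetric] sum.distrib sum_distrib_left)
  also have "(\<Sum>j=0..k. h j * pmf p j) = measure_pmf.expectation p h"
    using assms(1) by (intro integral_measure_pmf_real[symmetric]) auto
  finally show ?thesis .
qed

lemma pmf_bind_rand_resp_le:
  assumes "set_pmf p \<subseteq> {0..k}" "set_pmf q \<subseteq> {0..k}" "k \<ge> 1" "\<epsilon> \<ge> 0"
  shows "pmf (p \<bind> rand_resp \<epsilon> k) j \<le> exp \<epsilon> * pmf (q \<bind> rand_resp \<epsilon> k) j"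
proof (cases "j \<le> k")
  case True
  have e: "exp \<epsilon> \<ge> 1" using assms(4) by simp
  have "(exp \<epsilon> - 1) * pmf p j + 1 \<le> exp \<epsilon>"
    using e mult_left_mono[OF pmf_le_1, of "exp \<epsilon> - 1" p j] by simp
  also have "\<dots> \<le> exp \<epsilon> * ((exp \<epsilon> - 1) * pmf q j + 1)"
    using e by (simp add: mult_left_mono)
  finally show ?thesis using True
    by (simp add: pmf_bind_rand_resp[OF assms(1,3)] pmf_bind_rand_resp[OF assms(2,3)]
                  divide_right_mono add_pos_nonneg)
qed (simp add: pmf_bind_rand_resp[OF assms(1,3)])

lemma measure_bind_rand_resp_le:
  assumes "set_pmf p \<subseteq> {0..k}" "set_pmf q \<subseteq> {0..k}" "k \<ge> 1" "\<epsilon> \<ge> 0"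
  shows "measure_pmf.prob (p \<bind> rand_resp \<epsilon> k) A \<le> exp \<epsilon> * measure_pmf.prob (q \<bind> rand_resp \<epsilon> k) A"
proof -
  have prob_eq_sum: "measure_pmf.prob (s \<bind> rand_resp \<epsilon> k) A = sum (pmf (s \<bind> rand_resp \<epsilon> k)) (A \<inter> {0..k})"
    if "set_pmf s \<subseteq> {0..k}" for s
  proof -
    have "measure_pmf.prob (s \<bind> rand_resp \<epsilon> k) A = measure_pmf.prob (s \<bind> rand_resp \<epsilon> k) (A \<inter> {0..k})"
      by (intro measure_prob_cong_0) (auto simp: pmf_bind_rand_resp[OF that assms(3)])
    then show ?thesis by (simp add: measure_measure_pmf_finite)
  qed
  show ?thesis
    unfolding prob_eq_sum[OF assms(1)] prob_eq_sum[OF assms(2)] sum_distrib_left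
    using assms by (intro sum_mono pmf_bind_rand_resp_le)
qed

lemma set_pmf_sr_level:
  assumes "0 \<le> r" "0 < rmax"
  shows "set_pmf (sr_level k rmax r) \<subseteq> {0..k}"
  unfolding sr_level_eq_stoch_round
  using assms by (intro set_pmf_stoch_round) (auto simp: divide_le_eq mult_left_mono)

lemma ScalarDP_eps_LDP:
  assumes "0 \<le> \<epsilon>" "k \<ge> 1" "0 < rmax"
  shows "eps_LDP \<epsilon> {r. r \<ge> 0} (\<lambda>r. ScalarDP r \<epsilon> k rmax)"
proof (unfold eps_LDP_def ScalarDP_def measure_map_pmf, intro ballI allI)
  fix r r' :: real and S
  assume "r \<in> {r. r \<ge> 0}" "r' \<in> {r. r \<ge> 0}"
  then show "measure_pmf.prob (sr_level k rmax r \<bind> rand_resp \<epsilon> k) S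
      \<le> exp \<epsilon> * measure_pmf.prob (sr_level k rmax r' \<bind> rand_resp \<epsilon> k) S"
    using assms by (intro measure_bind_rand_resp_le set_pmf_sr_level) auto
qed

lemma sum_of_squares_atLeast0_atMost: "(\<Sum>j=0..k. (real j)\<^sup>2) = real k * (real k + 1) * (2 * real k + 1) / 6"
  by (induction k) (auto simp: field_simps power2_eq_square)

lemma expectation_sr_level_rand_resp_quadratic:
  assumes "k \<ge> 1" "0 < rmax" "0 \<le> r" "r \<le> rmax"
  defines "x \<equiv> real k * r / rmax"
  shows "measure_pmf.expectation (sr_level k rmax r \<bind> rand_resp \<epsilon> k)
           (\<lambda>j. \<alpha> + \<beta> * real j + \<gamma> * (real j)\<^sup>2)
     = ((exp \<epsilon> - 1) * (\<alpha> + \<beta> * x + \<gamma> * (x\<^sup>2 + frac x * (1 - frac x)))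
        + (real k + 1) * \<alpha> + \<beta> * (real k * (real k + 1) / 2)
        + \<gamma> * (real k * (real k + 1) * (2 * real k + 1) / 6)) / (exp \<epsilon> + real k)"
proof -
  have gauss: "(\<Sum>j=0..k. real j) = real k * (real k + 1) / 2"
    using double_gauss_sum[of k, where 'a = real] by simp
  have "sr_level k rmax r = stoch_round x"
    using assms(4) unfolding sr_level_eq_stoch_round x_def by simp
  moreover note expectation_bind_rand_resp[OF set_pmf_sr_level[OF assms(3,2)] assms(1)]
  moreover have "0 \<le> x" using assms(2,3) unfolding x_def by simp
  moreover have "(\<Sum>j=0..k. \<alpha> + \<beta> * real j + \<gamma> * (real j)\<^sup>2)
      = (real k + 1) * \<alpha> + \<beta> * (real k * (real k + 1) / 2)
        + \<gamma> * (real k * (real k + 1) * (2 * real k + 1) / 6)"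
    by (simp add: sum.distrib sum_distrib_left[symmetric] gauss sum_of_squares_atLeast0_atMost)
  ultimately show ?thesis by (simp add: expectation_stoch_round_quadratic)
qed

lemma expectation_ScalarDP:
  assumes "0 < \<epsilon>" "k \<ge> 1" "0 < rmax" "0 \<le> r" "r \<le> rmax"
  shows "measure_pmf.expectation (ScalarDP r \<epsilon> k rmax) (\<lambda>z. z) = r"
proof -
  define a b c d x where "a = sdp_a \<epsilon> k rmax" and "b = sdp_b \<epsilon> k"
    and "c = exp \<epsilon> + real k" and "d = exp \<epsilon> - 1" and "x = real k * r / rmax"
  have "c = d + real k + 1" "0 < c" "0 < d" "0 < real k"
    using assms(1,2) unfolding c_def d_def by (auto simp: add_pos_nonneg)
  have "measure_pmf.expectation (ScalarDP r \<epsilon> k rmax) (\<lambda>z. z)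
      = measure_pmf.expectation (sr_level k rmax r \<bind> rand_resp \<epsilon> k)
          (\<lambda>j. - a * b + a * real j + 0 * (real j)\<^sup>2)"
    unfolding ScalarDP_def a_def b_def by (simp add: algebra_simps)
  also have "\<dots> = (d * (- a * b + a * x) + (real k + 1) * (- a * b) + a * (real k * (real k + 1) / 2)) / c"
    unfolding expectation_sr_level_rand_resp_quadratic[OF assms(2-5)] c_def d_def x_def by simp
  also have "\<dots> = a * (d * x - c * b + real k * (real k + 1) / 2) / c"
    unfolding \<open>c = d + real k + 1\<close> by (simp add: algebra_simps)
  \<comment> \<open>b is chosen so that c b = \<Sum>j\<le>k. j, which removes the uniform component.\<close>
  also have "\<dots> = a * d * x / c"
    using \<open>0 < c\<close> unfolding b_def sdp_b_def c_def[symmetric] by simp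
  also have "\<dots> = r"
    using \<open>0 < c\<close> \<open>0 < d\<close> \<open>0 < real k\<close> assms(3)
    unfolding a_def sdp_a_def x_def c_def[symmetric] d_def[symmetric] by simp
  finally show ?thesis .
qed

lemma mse_ScalarDP_eq:
  assumes "0 < \<epsilon>" "k \<ge> 1" "0 < rmax" "0 \<le> r" "r \<le> rmax"
  defines "c \<equiv> exp \<epsilon> + real k" and "d \<equiv> exp \<epsilon> - 1" and "u \<equiv> rmax / real k"
    and "S1 \<equiv> real k * (real k + 1) / 2" and "S2 \<equiv> real k * (real k + 1) * (2 * real k + 1) / 6"
    and "v \<equiv> frac (real k * r / rmax) * (1 - frac (real k * r / rmax))"
  shows "measure_pmf.expectation (ScalarDP r \<epsilon> k rmax) (\<lambda>z. (z - r)\<^sup>2)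
     = ((real k + 1) * r\<^sup>2 + c * u\<^sup>2 * v - 2 * S1 * u * r) / d + u\<^sup>2 * (c * S2 - S1\<^sup>2) / d\<^sup>2"
proof -
  define a b x where "a = sdp_a \<epsilon> k rmax" and "b = sdp_b \<epsilon> k" and "x = real k * r / rmax"
  have K1: "real k + 1 = c - d" and "0 < c" "0 < d"
    using assms(1,2) unfolding c_def d_def by (auto simp: add_pos_nonneg)
  have a: "a = c / d * u" unfolding a_def sdp_a_def c_def d_def u_def ..
  have ab: "a * b = u * S1 / d"
    using \<open>0 < c\<close> \<open>0 < d\<close> unfolding a b_def sdp_b_def S1_def c_def[symmetric] by simp
  have ax: "a * x = c * r / d" using assms(2,3) unfolding a x_def u_def by simp
  have "measure_pmf.expectation (ScalarDP r \<epsilon> k rmax) (\<lambda>z. (z - r)\<^sup>2)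
      = measure_pmf.expectation (sr_level k rmax r \<bind> rand_resp \<epsilon> k)
          (\<lambda>j. (a * b + r)\<^sup>2 + (- 2 * a * (a * b + r)) * real j + a\<^sup>2 * (real j)\<^sup>2)"
    unfolding ScalarDP_def a_def b_def by (simp add: algebra_simps power2_eq_square)
  also have "\<dots> = (d * ((a * b + r)\<^sup>2 - 2 * a * (a * b + r) * x + a\<^sup>2 * (x\<^sup>2 + v))
          + (real k + 1) * (a * b + r)\<^sup>2 - 2 * a * (a * b + r) * S1 + a\<^sup>2 * S2) / c"
    unfolding expectation_sr_level_rand_resp_quadratic[OF assms(2-5)]
    unfolding v_def[symmetric]
    unfolding c_def[symmetric] d_def[symmetric] x_def[symmetric] S1_def[symmetric] S2_def[symmetric]
    by (simp add: algebra_simps)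
  also have "\<dots> = (a * b + r)\<^sup>2 - 2 * (a * x) * (a * b + r) * d / c + (a * x)\<^sup>2 * d / c
        + a\<^sup>2 * v * d / c - 2 * a * (a * b + r) * S1 / c + a\<^sup>2 * S2 / c"
    using \<open>0 < c\<close> unfolding K1 by (simp add: field_simps power2_eq_square)
  also have "\<dots> = (u * S1 / d + r)\<^sup>2 - 2 * r * (u * S1 / d + r) + c * r\<^sup>2 / d + c * u\<^sup>2 * v / d
        - 2 * u * (u * S1 / d + r) * S1 / d + c * u\<^sup>2 * S2 / d\<^sup>2"
    unfolding ab ax unfolding a using \<open>0 < c\<close> \<open>0 < d\<close> by (simp add: field_simps power2_eq_square)
  also have "\<dots> = ((real k + 1) * r\<^sup>2 + c * u\<^sup>2 * v - 2 * S1 * u * r) / d + u\<^sup>2 * (c * S2 - S1\<^sup>2) / d\<^sup>2"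
    using \<open>0 < d\<close> unfolding K1 by (simp add: field_simps power2_eq_square)
  finally show ?thesis .
qed

lemma mse_ScalarDP_le:
  assumes "0 < \<epsilon>" "k \<ge> 1" "0 < rmax" "0 \<le> r" "r \<le> rmax"
  shows "measure_pmf.expectation (ScalarDP r \<epsilon> k rmax) (\<lambda>z. (z - r)^2)
     \<le> (real k + 1) / (exp \<epsilon> - 1) *
           (r^2 + rmax^2 / (4 * real k^2)
            + (2 * real k + 1) * (exp \<epsilon> + real k) * rmax^2 / (6 * real k * (exp \<epsilon> - 1)))
         + rmax^2 / (4 * real k^2)"
proof -
  define c d u S1 S2 v where "c = exp \<epsilon> + real k" and "d = exp \<epsilon> - 1" and "u = rmax / real k"
    and "S1 = real k * (real k + 1) / 2" and "S2 = real k * (real k + 1) * (2 * real k + 1) / 6"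
    and "v = frac (real k * r / rmax) * (1 - frac (real k * r / rmax))"
  have "0 < c" "0 < d" "0 < u" "0 \<le> S1"
    using assms(1-3) unfolding c_def d_def u_def S1_def by (auto simp: add_pos_nonneg)
  have "v \<le> 1/4"
    unfolding v_def using zero_le_power2[of "frac (real k * r / rmax) - 1/2"]
    by (simp add: algebra_simps power2_eq_square)
  have "measure_pmf.expectation (ScalarDP r \<epsilon> k rmax) (\<lambda>z. (z - r)^2)
      = ((real k + 1) * r^2 + c * u^2 * v - 2 * S1 * u * r) / d + u^2 * (c * S2 - S1^2) / d^2"
    unfolding c_def d_def u_def S1_def S2_def v_def by (rule mse_ScalarDP_eq[OF assms])
  also have "\<dots> \<le> ((real k + 1) * r^2 + c * u^2 / 4) / d + u^2 * (c * S2) / d^2"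
  proof -
    have "c * u^2 * v \<le> c * u^2 * (1/4)"
      using \<open>v \<le> 1/4\<close> \<open>0 < c\<close> by (intro mult_left_mono) auto
    moreover have "0 \<le> 2 * S1 * u * r" using \<open>0 \<le> S1\<close> \<open>0 < u\<close> assms(4) by simp
    ultimately have "(real k + 1) * r^2 + c * u^2 * v - 2 * S1 * u * r \<le> (real k + 1) * r^2 + c * u^2 / 4"
      by linarith
    moreover have "u^2 * (c * S2 - S1^2) \<le> u^2 * (c * S2)" by (simp add: mult_left_mono)
    ultimately show ?thesis
      using \<open>0 < d\<close> by (intro add_mono divide_right_mono) auto
  qed
  also have "\<dots> = (real k + 1) / d * (r^2 + rmax^2 / (4 * real k^2)
            + (2 * real k + 1) * c * rmax^2 / (6 * real k * d)) + rmax^2 / (4 * real k^2)"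
  proof -
    have "c = d + real k + 1" unfolding c_def d_def by simp
    then have "c * u^2 / 4 / d = (real k + 1) / d * (rmax^2 / (4 * real k^2)) + rmax^2 / (4 * real k^2)"
      using \<open>0 < d\<close> assms(2) unfolding u_def by (simp add: field_simps power2_eq_square)
    moreover have "u^2 * (c * S2) / d^2 = (real k + 1) / d * ((2 * real k + 1) * c * rmax^2 / (6 * real k * d))"
      using \<open>0 < d\<close> assms(2) unfolding u_def S2_def by (simp add: field_simps power2_eq_square)
    ultimately show ?thesis by (simp add: algebra_simps add_divide_distrib)
  qed
  finally show ?thesis unfolding c_def d_def .
qed

theorem lemma4p9:
  fixes \<epsilon> rmax :: real and k :: nat
  assumes "\<epsilon> > 0" and "k \<ge> 1" and "rmax > 0"
  shows "eps_LDP \<epsilon> {r. r \<ge> 0} (\<lambda>r. ScalarDP r \<epsilon> k rmax)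
    \<and> (\<forall>r. 0 \<le> r \<and> r \<le> rmax \<longrightarrow>
         measure_pmf.expectation (ScalarDP r \<epsilon> k rmax) (\<lambda>z. z) = r
       \<and> measure_pmf.expectation (ScalarDP r \<epsilon> k rmax) (\<lambda>z. (z - r)^2)
           \<le> (real k + 1) / (exp \<epsilon> - 1) *
               (r^2 + rmax^2 / (4 * real k^2)
                + (2 * real k + 1) * (exp \<epsilon> + real k) * rmax^2
                  / (6 * real k * (exp \<epsilon> - 1)))
             + rmax^2 / (4 * real k^2))"
  using ScalarDP_eps_LDP[OF less_imp_le[OF assms(1)] assms(2,3)]
    expectation_ScalarDP[OF assms] mse_ScalarDP_le[OF assms] by blast

end
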